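(* Let $(m_i,e_i)\in M\times\mathbb{Z}$, $i=1,\dots,r$, with $m_1,\dots,m_r$ nonzero and generating the lattice $M$. Let $\omega=\operatorname{Cone}(m_1,\dots,m_r)$ and $\Delta=\{v\in N_{\mathbb{Q}}:\langle m_i,v\rangle\ge-e_i,\ i=1,\dots,r\}$. Let $L=\mathbb{Q}_{\ge0}m\subset\omega$ be a ray with primitive lattice vector $m$. Let $p:\mathbb{Q}^r\to M_{\mathbb{Q}}$ be the linear map sending the $i$-th standard basis vector to $m_i$, let $\mathscr{H}_L$ be the Hilbert basis (in $\mathbb{Z}^r$) of the cone $p^{-1}(L)\cap\mathbb{Q}_{\ge0}^r$, and $\mathscr{H}_L^*=\{s\in\mathscr{H}_L: \sum_is_im_i\ne0\}$; for $s\in\mathscr{H}_L^*$ let $\lambda(s)\in\mathbb{Z}_{>0}$ be defined by $\sum_is_im_i=\lambda(s)m$. Then $\min_{v\in\Delta}\langle m,v\rangle=-\min_{s\in\mathscr{H}_L^*}\frac{\sum_{i=1}^rs_ie_i}{\lambda(s)}$.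
   Context: $M,N$ are dual lattices of finite rank with associated $\mathbb{Q}$-vector spaces $M_{\mathbb{Q}},N_{\mathbb{Q}}$. The Hilbert basis of a strongly convex rational polyhedral cone is the unique minimal generating set of the monoid of its lattice points. *)

theory Defs
  imports "HOL-Analysis.Finite_Cartesian_Product"
begin

text \<open>The lattice M is modelled as int^'n, M_Q as rat^'n, N_Q as rat^'n with the
standard pairing.  The index set {1..r} is a finite type 'r.\<close>

definition rvec :: "int^'n \<Rightarrow> rat^'n" where
  "rvec x = (\<chi> i. of_int (x $ i))"

definition pairing :: "int^'n::finite \<Rightarrow> rat^'n \<Rightarrow> rat" where
  "pairing m v = (\<Sum>i\<in>UNIV. of_int (m $ i) * v $ i)"

definition lattice_points :: "(rat^'n) set \<Rightarrow> (int^'n) set" where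
  "lattice_points C = {x. rvec x \<in> C}"

definition monoid_span :: "(int^'n) set \<Rightarrow> (int^'n) set" where
  "monoid_span H = {x. \<exists>F c. finite F \<and> F \<subseteq> H \<and>
      x = (\<Sum>h\<in>F. (int (c h)) *s h)}"

definition hilbert_basis :: "(rat^'n) set \<Rightarrow> (int^'n) set" where
  "hilbert_basis C = (THE H. H \<subseteq> lattice_points C \<and> monoid_span H = lattice_points C \<and>
      (\<forall>H'. H' \<subset> H \<longrightarrow> monoid_span H' \<noteq> lattice_points C))"

definition pmap :: "('r::finite \<Rightarrow> int^'n) \<Rightarrow> rat^'r \<Rightarrow> rat^'n" where
  "pmap ms s = (\<Sum>i\<in>UNIV. (s $ i) *s rvec (ms i))"

definition cone_gen :: "('r::finite \<Rightarrow> int^'n) \<Rightarrow> (rat^'n) set" where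
  "cone_gen ms = {(\<Sum>i\<in>UNIV. a i *s rvec (ms i)) | a. \<forall>i. a i \<ge> 0}"

definition ray :: "int^'n \<Rightarrow> (rat^'n) set" where
  "ray m = {q *s rvec m | q. q \<ge> 0}"

definition Delta :: "('r::finite \<Rightarrow> int^'n::finite) \<Rightarrow> ('r \<Rightarrow> int) \<Rightarrow> (rat^'n) set" where
  "Delta ms e = {v. \<forall>i. pairing (ms i) v \<ge> - of_int (e i)}"

definition fiber_cone :: "('r::finite \<Rightarrow> int^'n) \<Rightarrow> int^'n \<Rightarrow> (rat^'r) set" where
  "fiber_cone ms m = {s. (\<forall>i. s $ i \<ge> 0) \<and> pmap ms s \<in> ray m}"

definition H_star :: "('r::finite \<Rightarrow> int^'n) \<Rightarrow> int^'n \<Rightarrow> (int^'r) set" where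
  "H_star ms m = {s \<in> hilbert_basis (fiber_cone ms m). pmap ms (rvec s) \<noteq> 0}"

definition lam :: "('r::finite \<Rightarrow> int^'n) \<Rightarrow> int^'n \<Rightarrow> int^'r \<Rightarrow> int" where
  "lam ms m s = (THE k. k > 0 \<and> pmap ms (rvec s) = of_int k *s rvec m)"

definition primitive :: "int^'n \<Rightarrow> bool" where
  "primitive m \<longleftrightarrow> m \<noteq> 0 \<and> (\<forall>k y. m = k *s y \<longrightarrow> \<bar>k\<bar> = 1)"

end

theory Submission
  imports Defs
begin

text \<open>The minimum of \<open>\<langle>m, v\<rangle>\<close> over \<open>\<Delta>\<close> is the value of a linear program whose dual is
  \<open>max { - \<Sum>\<^sub>i y\<^sub>i e\<^sub>i | y \<ge> 0, \<Sum>\<^sub>i y\<^sub>i m\<^sub>i = m }\<close>; strong duality follows from Farkas'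
  lemma, proved by Fourier--Motzkin elimination. Weak duality bounds every
  \<open>(\<Sum>\<^sub>i s\<^sub>i e\<^sub>i) / \<lambda>(s)\<close> from below by \<open>- min \<langle>m, \<Delta>\<rangle>\<close>. Conversely an optimal rational dual
  solution, scaled to a lattice point of the fibre cone, is a nonnegative integer combination of
  Hilbert basis elements (the irreducibles of the monoid); each satisfies the weak duality bound,
  so one of them with \<open>\<lambda> > 0\<close> attains it with equality.\<close>

subsection \<open>Farkas' lemma by Fourier--Motzkin elimination\<close>

text \<open>A pair \<open>(a, b)\<close> encodes the linear inequality \<open>\<Sum>v\<in>V. a v * x v \<ge> b\<close>.\<close>

definition ineq_add :: "(('v \<Rightarrow> rat) \<times> rat) \<Rightarrow> (('v \<Rightarrow> rat) \<times> rat) \<Rightarrow> (('v \<Rightarrow> rat) \<times> rat)" where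
  "ineq_add p q = ((\<lambda>v. fst p v + fst q v), snd p + snd q)"

definition ineq_scale :: "rat \<Rightarrow> (('v \<Rightarrow> rat) \<times> rat) \<Rightarrow> (('v \<Rightarrow> rat) \<times> rat)" where
  "ineq_scale t p = ((\<lambda>v. t * fst p v), t * snd p)"

inductive_set ineq_cone :: "(('v \<Rightarrow> rat) \<times> rat) set \<Rightarrow> (('v \<Rightarrow> rat) \<times> rat) set" for C where
  zero: "((\<lambda>v. 0), 0) \<in> ineq_cone C"
| step: "x \<in> ineq_cone C \<Longrightarrow> c \<in> C \<Longrightarrow> t \<ge> 0 \<Longrightarrow> ineq_add x (ineq_scale t c) \<in> ineq_cone C"

definition satisfies :: "'v set \<Rightarrow> ('v \<Rightarrow> rat) \<Rightarrow> (('v \<Rightarrow> rat) \<times> rat) \<Rightarrow> bool" where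
  "satisfies V x c \<longleftrightarrow> (\<Sum>v\<in>V. fst c v * x v) \<ge> snd c"

lemma ineq_cone_base: "c \<in> C \<Longrightarrow> c \<in> ineq_cone C"
  using ineq_cone.step[OF ineq_cone.zero, of c C 1] by (simp add: ineq_add_def ineq_scale_def)

lemma ineq_cone_add: "y \<in> ineq_cone C \<Longrightarrow> x \<in> ineq_cone C \<Longrightarrow> ineq_add x y \<in> ineq_cone C"
proof (induction y rule: ineq_cone.induct)
  case zero
  then show ?case by (simp add: ineq_add_def)
next
  case (step y c t)
  have "ineq_add x (ineq_add y (ineq_scale t c)) = ineq_add (ineq_add x y) (ineq_scale t c)"
    by (simp add: ineq_add_def algebra_simps)
  then show ?case using step by (metis ineq_cone.step)
qed

lemma ineq_cone_scale: "x \<in> ineq_cone C \<Longrightarrow> s \<ge> 0 \<Longrightarrow> ineq_scale s x \<in> ineq_cone C"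
proof (induction x rule: ineq_cone.induct)
  case zero
  then show ?case by (simp add: ineq_scale_def ineq_cone.zero)
next
  case (step y c t)
  have "ineq_scale s (ineq_add y (ineq_scale t c)) = ineq_add (ineq_scale s y) (ineq_scale (s * t) c)"
    by (simp add: ineq_add_def ineq_scale_def algebra_simps)
  then show ?case using step by (metis ineq_cone.step mult_nonneg_nonneg)
qed

lemma ineq_cone_mono: "x \<in> ineq_cone C \<Longrightarrow> C \<subseteq> ineq_cone D \<Longrightarrow> x \<in> ineq_cone D"
  by (induction x rule: ineq_cone.induct) (auto intro: ineq_cone.zero ineq_cone_add ineq_cone_scale)

lemma ineq_cone_coeff_zero: "x \<in> ineq_cone C \<Longrightarrow> \<forall>c\<in>C. fst c w = 0 \<Longrightarrow> fst x w = 0"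
  by (induction x rule: ineq_cone.induct) (auto simp: ineq_add_def ineq_scale_def)

lemma ineq_cone_finite_repr:
  assumes "finite I"
  shows "x \<in> ineq_cone (f ` I) \<Longrightarrow> \<exists>y. (\<forall>i\<in>I. y i \<ge> 0) \<and>
     fst x = (\<lambda>v. \<Sum>i\<in>I. y i * fst (f i) v) \<and> snd x = (\<Sum>i\<in>I. y i * snd (f i))"
proof (induction x rule: ineq_cone.induct)
  case zero
  then show ?case by (intro exI[of _ "\<lambda>_. 0"]) auto
next
  case (step x c t)
  then obtain y where y: "\<forall>i\<in>I. y i \<ge> 0" "fst x = (\<lambda>v. \<Sum>i\<in>I. y i * fst (f i) v)"
      "snd x = (\<Sum>i\<in>I. y i * snd (f i))" by blast
  obtain i0 where i0: "i0 \<in> I" "c = f i0" using step by auto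
  define y' where "y' i = y i + (if i = i0 then t else 0)" for i
  have sum_y': "(\<Sum>i\<in>I. y' i * F i) = (\<Sum>i\<in>I. y i * F i) + t * F i0" for F :: "_ \<Rightarrow> rat"
  proof -
    have "(\<Sum>i\<in>I. y' i * F i) = (\<Sum>i\<in>I. y i * F i) + (\<Sum>i\<in>I. (if i = i0 then t else 0) * F i)"
      by (simp add: y'_def distrib_right sum.distrib)
    also have "(\<Sum>i\<in>I. (if i = i0 then t else 0) * F i) = (\<Sum>i\<in>I. if i = i0 then t * F i else 0)"
      by (rule sum.cong) auto
    finally show ?thesis using i0 assms by simp
  qed
  have "\<forall>i\<in>I. y' i \<ge> 0" using y step by (auto simp: y'_def)
  then show ?case
    using i0 by (intro exI[of _ y']) (simp add: sum_y' ineq_add_def ineq_scale_def y(2,3))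
qed

definition fm_combine :: "'v \<Rightarrow> (('v \<Rightarrow> rat) \<times> rat) \<Rightarrow> (('v \<Rightarrow> rat) \<times> rat) \<Rightarrow> (('v \<Rightarrow> rat) \<times> rat)" where
  "fm_combine w p q = ineq_add (ineq_scale (- fst q w) p) (ineq_scale (fst p w) q)"

definition fm_eliminate :: "'v \<Rightarrow> (('v \<Rightarrow> rat) \<times> rat) set \<Rightarrow> (('v \<Rightarrow> rat) \<times> rat) set" where
  "fm_eliminate w C = {c\<in>C. fst c w = 0} \<union>
     (\<lambda>(p, q). fm_combine w p q) ` ({p\<in>C. fst p w > 0} \<times> {q\<in>C. fst q w < 0})"

lemma finite_fm_eliminate: "finite C \<Longrightarrow> finite (fm_eliminate w C)"
  by (simp add: fm_eliminate_def)

lemma fm_eliminate_subset_ineq_cone: "fm_eliminate w C \<subseteq> ineq_cone C"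
proof
  fix c assume "c \<in> fm_eliminate w C"
  then consider "c \<in> C"
    | p q where "p \<in> C" "q \<in> C" "fst p w > 0" "fst q w < 0" "c = fm_combine w p q"
    by (auto simp: fm_eliminate_def)
  then show "c \<in> ineq_cone C"
  proof cases
    case 1
    then show ?thesis by (rule ineq_cone_base)
  next
    case 2
    then show ?thesis
      unfolding fm_combine_def by (auto intro!: ineq_cone_add ineq_cone_scale intro: ineq_cone_base)
  qed
qed

lemma fm_eliminate_coeff_zero: "c \<in> fm_eliminate w C \<Longrightarrow> fst c w = 0"
  by (auto simp: fm_eliminate_def fm_combine_def ineq_add_def ineq_scale_def)

lemma satisfies_fm_combine:
  fixes p q :: "('v \<Rightarrow> rat) \<times> rat" and x :: "'v \<Rightarrow> rat" and V :: "'v set"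
  defines "S c \<equiv> \<Sum>v\<in>V. fst c v * x v"
  assumes p: "fst p w > 0" and q: "fst q w < 0" and sat: "satisfies V x (fm_combine w p q)"
  shows "(snd p - S p) / fst p w \<le> (snd q - S q) / fst q w"
proof -
  have "(\<Sum>v\<in>V. fst (fm_combine w p q) v * x v)
      = (\<Sum>v\<in>V. (- fst q w) * (fst p v * x v) + fst p w * (fst q v * x v))"
    by (rule sum.cong) (auto simp: fm_combine_def ineq_add_def ineq_scale_def algebra_simps)
  also have "\<dots> = (- fst q w) * S p + fst p w * S q"
    by (simp only: sum.distrib sum_distrib_left[symmetric] S_def)
  finally have "(\<Sum>v\<in>V. fst (fm_combine w p q) v * x v) = (- fst q w) * S p + fst p w * S q" .
  then have "(- fst q w) * (snd p - S p) \<le> fst p w * (S q - snd q)"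
    using sat by (simp add: satisfies_def fm_combine_def ineq_add_def ineq_scale_def algebra_simps)
  then show ?thesis
    using p q by (simp add: divide_simps mult.commute) (simp add: algebra_simps)
qed

lemma exists_between_finite_sets:
  fixes A B :: "'a::linorder set"
  assumes "finite A" "finite B" "\<forall>a\<in>A. \<forall>b\<in>B. a \<le> b"
  shows "\<exists>t. (\<forall>a\<in>A. a \<le> t) \<and> (\<forall>b\<in>B. t \<le> b)"
proof (cases "A = {}")
  case True
  then show ?thesis using assms by (intro exI[of _ "Min B"]) auto
next
  case False
  then show ?thesis using assms by (intro exI[of _ "Max A"]) (auto simp: Max_le_iff)
qed

lemma fm_eliminate_satisfiable:
  assumes "finite V" "finite C" "w \<notin> V" and sat: "\<forall>c\<in>fm_eliminate w C. satisfies V x c"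
  shows "\<exists>t. \<forall>c\<in>C. satisfies (insert w V) (x(w := t)) c"
proof -
  define S where "S c = (\<Sum>v\<in>V. fst c v * x v)" for c :: "('a \<Rightarrow> rat) \<times> rat"
  define L where "L c = (snd c - S c) / fst c w" for c :: "('a \<Rightarrow> rat) \<times> rat"
  have sum_upd: "(\<Sum>v\<in>insert w V. fst c v * (x(w := t)) v) = fst c w * t + S c" for c t
    using assms(1,3) unfolding S_def by (simp add: sum.insert_if) (intro sum.cong; auto)
  have "L p \<le> L q" if "p \<in> C" "fst p w > 0" "q \<in> C" "fst q w < 0" for p q
  proof -
    have "fm_combine w p q \<in> fm_eliminate w C" using that by (auto simp: fm_eliminate_def)
    then show ?thesis using sat that unfolding L_def S_def by (blast intro: satisfies_fm_combine)
  qed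
  then have "\<forall>p\<in>{p\<in>C. fst p w > 0}. \<forall>q\<in>{q\<in>C. fst q w < 0}. L p \<le> L q" by blast
  then obtain t where t: "\<forall>p\<in>{p\<in>C. fst p w > 0}. L p \<le> t" "\<forall>q\<in>{q\<in>C. fst q w < 0}. t \<le> L q"
    using exists_between_finite_sets[of "L ` {p\<in>C. fst p w > 0}" "L ` {q\<in>C. fst q w < 0}"] assms(2)
    by auto
  have "satisfies (insert w V) (x(w := t)) c" if c: "c \<in> C" for c
  proof (cases "fst c w" "0::rat" rule: linorder_cases)
    case less
    then have "t \<le> L c" using t c by blast
    then show ?thesis
      using less unfolding satisfies_def sum_upd by (simp add: L_def neg_le_divide_eq algebra_simps)
  next
    case equal
    then have "c \<in> fm_eliminate w C" using c by (simp add: fm_eliminate_def)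
    then show ?thesis using sat equal unfolding satisfies_def sum_upd by (simp add: S_def)
  next
    case greater
    then have "L c \<le> t" using t c by blast
    then show ?thesis
      using greater unfolding satisfies_def sum_upd by (simp add: L_def pos_divide_le_eq algebra_simps)
  qed
  then show ?thesis by blast
qed

lemma farkas:
  assumes "finite V" "finite C" and infeasible: "\<not> (\<exists>x. \<forall>c\<in>C. satisfies V x c)"
  shows "\<exists>a b. (a, b) \<in> ineq_cone C \<and> (\<forall>v\<in>V. a v = 0) \<and> b > 0"
  using assms
proof (induction V arbitrary: C rule: finite_induct)
  case empty
  then obtain c where "c \<in> C" "snd c > 0" by (force simp: satisfies_def)
  then show ?case by (intro exI[of _ "fst c"] exI[of _ "snd c"]) (auto intro: ineq_cone_base)
next
  case (insert w V)
  have "\<not> (\<exists>x. \<forall>c\<in>fm_eliminate w C. satisfies V x c)"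
    using fm_eliminate_satisfiable[OF insert.hyps(1) insert.prems(1) insert.hyps(2)] insert.prems(2) by blast
  then obtain a b where ab: "(a, b) \<in> ineq_cone (fm_eliminate w C)" "\<forall>v\<in>V. a v = 0" "b > 0"
    using insert.IH finite_fm_eliminate[OF insert.prems(1)] by blast
  have "a w = 0"
    using ineq_cone_coeff_zero[OF ab(1)] fm_eliminate_coeff_zero by fastforce
  moreover have "(a, b) \<in> ineq_cone C"
    using ineq_cone_mono[OF ab(1) fm_eliminate_subset_ineq_cone] .
  ultimately show ?case using ab by auto
qed

subsection \<open>Linear programming duality\<close>

lemma sum_UNIV_Plus:
  "sum g (UNIV :: ('a::finite + 'b::finite) set) = (\<Sum>a\<in>UNIV. g (Inl a)) + (\<Sum>b\<in>UNIV. g (Inr b))"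
proof -
  have "sum g (UNIV <+> UNIV) = sum (g \<circ> Inl) (UNIV :: 'a set) + sum (g \<circ> Inr) (UNIV :: 'b set)"
    by (rule sum.Plus) auto
  then show ?thesis by (simp add: comp_def)
qed

lemma sum_bilinear_swap:
  "(\<Sum>j\<in>B. (x j :: 'a::comm_semiring_0) * (\<Sum>i\<in>A. a i * M i j)) = (\<Sum>i\<in>A. a i * (\<Sum>j\<in>B. M i j * x j))"
proof -
  have "(\<Sum>j\<in>B. x j * (\<Sum>i\<in>A. a i * M i j)) = (\<Sum>j\<in>B. \<Sum>i\<in>A. a i * (M i j * x j))"
    by (simp add: sum_distrib_left ac_simps)
  also have "\<dots> = (\<Sum>i\<in>A. \<Sum>j\<in>B. a i * (M i j * x j))" by (rule sum.swap)
  also have "\<dots> = (\<Sum>i\<in>A. a i * (\<Sum>j\<in>B. M i j * x j))" by (simp add: sum_distrib_left)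
  finally show ?thesis .
qed

lemma lp_weak_duality:
  fixes M :: "'r::finite \<Rightarrow> 'n::finite \<Rightarrow> rat"
  assumes "\<forall>i. y i \<ge> 0" "\<forall>i. (\<Sum>j\<in>UNIV. M i j * x j) \<ge> - E i"
    and "\<forall>j. (\<Sum>i\<in>UNIV. y i * M i j) = mm j"
  shows "(\<Sum>i\<in>UNIV. y i * E i) \<ge> - (\<Sum>j\<in>UNIV. mm j * x j)"
proof -
  have "- (\<Sum>j\<in>UNIV. mm j * x j) = - (\<Sum>j\<in>UNIV. x j * (\<Sum>i\<in>UNIV. y i * M i j))"
    using assms(3) by (simp add: mult.commute)
  also have "\<dots> = (\<Sum>i\<in>UNIV. y i * (- (\<Sum>j\<in>UNIV. M i j * x j)))"
    by (simp add: sum_bilinear_swap sum_negf)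
  also have "\<dots> \<le> (\<Sum>i\<in>UNIV. y i * E i)"
    by (intro sum_mono mult_left_mono) (use assms in \<open>auto simp: minus_le_iff\<close>)
  finally show ?thesis .
qed

text \<open>Primal feasibility \<open>M x \<ge> - E\<close>, dual feasibility \<open>y \<ge> 0, y M = mm\<close> and the reverse of weak
  duality \<open>- y E \<ge> mm x\<close>, as one system of inequalities in the variables \<open>x\<close> (\<open>Inl\<close>) and
  \<open>y\<close> (\<open>Inr\<close>).\<close>

definition lp_system ::
    "('r \<Rightarrow> 'n \<Rightarrow> rat) \<Rightarrow> ('r \<Rightarrow> rat) \<Rightarrow> ('n \<Rightarrow> rat) \<Rightarrow>
     ('r + 'r) + ('n + 'n) + unit \<Rightarrow> (('n + 'r \<Rightarrow> rat) \<times> rat)" where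
  "lp_system M E mm k = (case k of
      Inl (Inl i) \<Rightarrow> (case_sum (\<lambda>j. M i j) (\<lambda>_. 0), - E i)
    | Inl (Inr i) \<Rightarrow> (case_sum (\<lambda>_. 0) (\<lambda>i'. if i' = i then 1 else 0), 0)
    | Inr (Inl (Inl j)) \<Rightarrow> (case_sum (\<lambda>_. 0) (\<lambda>i. M i j), mm j)
    | Inr (Inl (Inr j)) \<Rightarrow> (case_sum (\<lambda>_. 0) (\<lambda>i. - M i j), - mm j)
    | Inr (Inr _) \<Rightarrow> (case_sum (\<lambda>j. - mm j) (\<lambda>i. - E i), 0))"

text \<open>\<open>\<alpha>\<close>, \<open>\<beta>\<close>, \<open>g\<close> and \<open>\<tau>\<close> are the multipliers a Farkas certificate for \<open>lp_system\<close> puts on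
  \<open>M x \<ge> - E\<close>, on \<open>y \<ge> 0\<close>, on \<open>y M = mm\<close> (as a difference of the two inequalities) and on
  \<open>- y E \<ge> mm x\<close>.\<close>

lemma lp_certificate_identity:
  fixes M :: "'r::finite \<Rightarrow> 'n::finite \<Rightarrow> rat"
  assumes "\<forall>j. (\<Sum>i\<in>UNIV. \<alpha> i * M i j) = \<tau> * mm j"
    and "\<forall>i. \<beta> i + (\<Sum>j\<in>UNIV. g j * M i j) = \<tau> * E i"
  shows "\<tau> * ((\<Sum>j\<in>UNIV. g j * mm j) - (\<Sum>i\<in>UNIV. \<alpha> i * E i)) = - (\<Sum>i\<in>UNIV. \<alpha> i * \<beta> i)"
proof -
  have "\<tau> * ((\<Sum>j\<in>UNIV. g j * mm j) - (\<Sum>i\<in>UNIV. \<alpha> i * E i))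
      = (\<Sum>j\<in>UNIV. g j * (\<tau> * mm j)) - (\<Sum>i\<in>UNIV. \<alpha> i * (\<tau> * E i))"
    by (simp add: right_diff_distrib sum_distrib_left mult.left_commute)
  also have "\<dots> = (\<Sum>j\<in>UNIV. g j * (\<Sum>i\<in>UNIV. \<alpha> i * M i j))
      - (\<Sum>i\<in>UNIV. \<alpha> i * (\<beta> i + (\<Sum>j\<in>UNIV. g j * M i j)))"
    using assms by simp
  also have "(\<Sum>j\<in>UNIV. g j * (\<Sum>i\<in>UNIV. \<alpha> i * M i j))
      = (\<Sum>i\<in>UNIV. \<alpha> i * (\<Sum>j\<in>UNIV. g j * M i j))"
    using sum_bilinear_swap[where x=g and a=\<alpha> and M=M] by (simp add: mult.commute)
  also have "\<dots> - (\<Sum>i\<in>UNIV. \<alpha> i * (\<beta> i + (\<Sum>j\<in>UNIV. g j * M i j)))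
      = - (\<Sum>i\<in>UNIV. \<alpha> i * \<beta> i)"
    by (simp add: distrib_left sum.distrib)
  finally show ?thesis .
qed

lemma lp_no_certificate:
  fixes M :: "'r::finite \<Rightarrow> 'n::finite \<Rightarrow> rat"
  assumes feasible: "\<forall>i. (\<Sum>j\<in>UNIV. M i j * x0 j) \<ge> - E i"
    and dual_feasible: "\<forall>i. y0 i \<ge> 0" "\<forall>j. (\<Sum>i\<in>UNIV. y0 i * M i j) = mm j"
    and nonneg: "\<forall>i. \<alpha> i \<ge> 0" "\<forall>i. \<beta> i \<ge> 0" "\<tau> \<ge> 0"
    and eq1: "\<forall>j. (\<Sum>i\<in>UNIV. \<alpha> i * M i j) = \<tau> * mm j"
    and eq2: "\<forall>i. \<beta> i + (\<Sum>j\<in>UNIV. g j * M i j) = \<tau> * E i"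
  shows "(\<Sum>j\<in>UNIV. g j * mm j) \<le> (\<Sum>i\<in>UNIV. \<alpha> i * E i)"
proof (cases "\<tau> = 0")
  case True
  have "(\<Sum>i\<in>UNIV. \<alpha> i * E i) \<ge> - (\<Sum>j\<in>UNIV. 0 * x0 j)"
    using lp_weak_duality[OF nonneg(1) feasible] eq1 True by simp
  moreover have "(\<Sum>j\<in>UNIV. g j * mm j) = (\<Sum>i\<in>UNIV. y0 i * (\<Sum>j\<in>UNIV. g j * M i j))"
    using sum_bilinear_swap[where x=g and a=y0 and M=M]
    by (simp add: dual_feasible(2)[rule_format, symmetric] mult.commute)
  moreover have "(\<Sum>j\<in>UNIV. g j * M i j) = - \<beta> i" for i
    using eq2 True by (simp add: eq_neg_iff_add_eq_0 add.commute)
  moreover have "(\<Sum>i\<in>UNIV. y0 i * \<beta> i) \<ge> 0"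
    using dual_feasible(1) nonneg(2) by (simp add: sum_nonneg)
  ultimately show ?thesis by (simp add: sum_negf)
next
  case False
  have "(\<Sum>i\<in>UNIV. \<alpha> i * \<beta> i) \<ge> 0" using nonneg by (simp add: sum_nonneg)
  then have "\<tau> * ((\<Sum>j\<in>UNIV. g j * mm j) - (\<Sum>i\<in>UNIV. \<alpha> i * E i)) \<le> 0"
    using lp_certificate_identity[OF eq1 eq2] by simp
  then show ?thesis using False nonneg(3) by (simp add: mult_le_0_iff)
qed

lemma lp_system_simps:
  "lp_system M E mm (Inl (Inl i)) = (case_sum (\<lambda>j. M i j) (\<lambda>_. 0), - E i)"
  "lp_system M E mm (Inl (Inr i)) = (case_sum (\<lambda>_. 0) (\<lambda>i'. if i' = i then 1 else 0), 0)"
  "lp_system M E mm (Inr (Inl (Inl j))) = (case_sum (\<lambda>_. 0) (\<lambda>i. M i j), mm j)"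
  "lp_system M E mm (Inr (Inl (Inr j))) = (case_sum (\<lambda>_. 0) (\<lambda>i. - M i j), - mm j)"
  "lp_system M E mm (Inr (Inr u)) = (case_sum (\<lambda>j. - mm j) (\<lambda>i. - E i), 0)"
  by (simp_all add: lp_system_def)

lemma lp_system_satisfiable:
  fixes M :: "'r::finite \<Rightarrow> 'n::finite \<Rightarrow> rat"
  assumes feasible: "\<forall>i. (\<Sum>j\<in>UNIV. M i j * x0 j) \<ge> - E i"
    and dual_feasible: "\<forall>i. y0 i \<ge> 0" "\<forall>j. (\<Sum>i\<in>UNIV. y0 i * M i j) = mm j"
  shows "\<exists>z. \<forall>k. satisfies UNIV z (lp_system M E mm k)"
proof (rule ccontr)
  assume "\<nexists>z. \<forall>k. satisfies UNIV z (lp_system M E mm k)"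
  then obtain a b where ab: "(a, b) \<in> ineq_cone (range (lp_system M E mm))" "\<forall>v. a v = 0" "b > 0"
    using farkas[of UNIV "range (lp_system M E mm)"] by auto
  then obtain y where y: "\<forall>k. y k \<ge> 0"
      "a = (\<lambda>v. \<Sum>k\<in>UNIV. y k * fst (lp_system M E mm k) v)"
      "b = (\<Sum>k\<in>UNIV. y k * snd (lp_system M E mm k))"
    using ineq_cone_finite_repr[OF finite ab(1)] by auto
  have sum_index: "(\<Sum>k\<in>UNIV. h k) = (\<Sum>i\<in>UNIV. h (Inl (Inl i))) + (\<Sum>i\<in>UNIV. h (Inl (Inr i))) +
      (\<Sum>j\<in>UNIV. h (Inr (Inl (Inl j)))) + (\<Sum>j\<in>UNIV. h (Inr (Inl (Inr j)))) + h (Inr (Inr ()))"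
    for h :: "('r + 'r) + ('n + 'n) + unit \<Rightarrow> rat"
    by (simp add: sum_UNIV_Plus UNIV_unit add.assoc)
  define \<alpha> where "\<alpha> i = y (Inl (Inl i))" for i
  define \<beta> where "\<beta> i = y (Inl (Inr i))" for i
  define g where "g j = y (Inr (Inl (Inl j))) - y (Inr (Inl (Inr j)))" for j
  define \<tau> where "\<tau> = y (Inr (Inr ()))"
  have eq1: "(\<Sum>i\<in>UNIV. \<alpha> i * M i j) = \<tau> * mm j" for j
    using ab(2)[rule_format, of "Inl j"] by (simp add: y(2) lp_system_simps sum_index \<alpha>_def \<tau>_def)
  have eq2: "\<beta> i + (\<Sum>j\<in>UNIV. g j * M i j) = \<tau> * E i" for i
    using ab(2)[rule_format, of "Inr i"]
    by (simp add: y(2) lp_system_simps sum_index \<beta>_def \<tau>_def g_def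
        left_diff_distrib sum_subtractf if_distrib sum_negf cong: if_cong)
  have "(\<Sum>j\<in>UNIV. g j * mm j) \<le> (\<Sum>i\<in>UNIV. \<alpha> i * E i)"
    using y(1) by (intro lp_no_certificate[OF feasible dual_feasible _ _ _ allI[OF eq1] allI[OF eq2]])
      (auto simp: \<alpha>_def \<beta>_def \<tau>_def)
  moreover have "(\<Sum>j\<in>UNIV. g j * mm j) - (\<Sum>i\<in>UNIV. \<alpha> i * E i) > 0"
    using ab(3) by (simp add: y(3) lp_system_simps sum_index \<alpha>_def g_def
        left_diff_distrib sum_subtractf sum_negf)
  ultimately show False by simp
qed

lemma lp_strong_duality:
  fixes M :: "'r::finite \<Rightarrow> 'n::finite \<Rightarrow> rat"
  assumes feasible: "\<forall>i. (\<Sum>j\<in>UNIV. M i j * x0 j) \<ge> - E i"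
    and dual_feasible: "\<forall>i. y0 i \<ge> 0" "\<forall>j. (\<Sum>i\<in>UNIV. y0 i * M i j) = mm j"
  shows "\<exists>x y. (\<forall>i. (\<Sum>j\<in>UNIV. M i j * x j) \<ge> - E i) \<and> (\<forall>i. y i \<ge> 0) \<and>
      (\<forall>j. (\<Sum>i\<in>UNIV. y i * M i j) = mm j) \<and> (\<Sum>i\<in>UNIV. y i * E i) = - (\<Sum>j\<in>UNIV. mm j * x j)"
proof -
  obtain z where z: "\<forall>k. satisfies UNIV z (lp_system M E mm k)"
    using lp_system_satisfiable[OF assms] by blast
  define x where "x j = z (Inl j)" for j
  define y where "y i = z (Inr i)" for i
  have sat_iff: "satisfies UNIV z c \<longleftrightarrow>
      (\<Sum>j\<in>UNIV. fst c (Inl j) * x j) + (\<Sum>i\<in>UNIV. fst c (Inr i) * y i) \<ge> snd c" for c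
    by (simp add: satisfies_def sum_UNIV_Plus x_def y_def)
  have primal: "\<forall>i. (\<Sum>j\<in>UNIV. M i j * x j) \<ge> - E i"
    using z[rule_format, of "Inl (Inl _)"] by (simp add: sat_iff lp_system_simps)
  moreover have dual_nonneg: "\<forall>i. y i \<ge> 0"
  proof
    fix i
    have "(\<Sum>i'\<in>UNIV. (if i' = i then 1 else 0) * y i') = (\<Sum>i'\<in>UNIV. if i' = i then y i' else 0)"
      by (rule sum.cong) auto
    then show "y i \<ge> 0"
      using z[rule_format, of "Inl (Inr i)"] by (simp add: sat_iff lp_system_simps)
  qed
  moreover have dual: "\<forall>j. (\<Sum>i\<in>UNIV. y i * M i j) = mm j"
  proof
    fix j
    show "(\<Sum>i\<in>UNIV. y i * M i j) = mm j"
      using z[rule_format, of "Inr (Inl (Inl j))"] z[rule_format, of "Inr (Inl (Inr j))"]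
      by (simp add: sat_iff lp_system_simps sum_negf mult.commute)
  qed
  moreover have "(\<Sum>i\<in>UNIV. y i * E i) \<le> - (\<Sum>j\<in>UNIV. mm j * x j)"
    using z[rule_format, of "Inr (Inr ())"] by (simp add: sat_iff lp_system_simps sum_negf mult.commute)
  moreover have "(\<Sum>i\<in>UNIV. y i * E i) \<ge> - (\<Sum>j\<in>UNIV. mm j * x j)"
    using lp_weak_duality[OF dual_nonneg primal dual] .
  ultimately show ?thesis by (intro exI[of _ x] exI[of _ y]) auto
qed

subsection \<open>Irreducibles and Hilbert bases\<close>

definition irreducibles :: "(int^'r) set \<Rightarrow> (int^'r) set" where
  "irreducibles S = {x\<in>S. x \<noteq> 0 \<and> (\<forall>a\<in>S. \<forall>b\<in>S. x = a + b \<longrightarrow> a = 0 \<or> b = 0)}"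

definition nonneg_submonoid :: "(int^'r::finite) set \<Rightarrow> bool" where
  "nonneg_submonoid S \<longleftrightarrow> 0 \<in> S \<and> (\<forall>a\<in>S. \<forall>b\<in>S. a + b \<in> S) \<and> (\<forall>x\<in>S. \<forall>i. x $ i \<ge> 0)"

lemma nonneg_submonoid_smult:
  assumes "nonneg_submonoid S" "h \<in> S"
  shows "int n *s h \<in> S"
proof (induction n)
  case 0
  then show ?case using assms(1) by (simp add: nonneg_submonoid_def)
next
  case (Suc n)
  have "int (Suc n) *s h = h + int n *s h" by (simp add: vector_sadd_rdistrib)
  then show ?case using Suc assms by (simp add: nonneg_submonoid_def)
qed

lemma nonneg_submonoid_sum:
  assumes "nonneg_submonoid S"
  shows "finite F \<Longrightarrow> (\<forall>h\<in>F. g h \<in> S) \<Longrightarrow> sum g F \<in> S"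
  by (induction F rule: finite_induct) (use assms in \<open>auto simp: nonneg_submonoid_def\<close>)

lemma monoid_span_subset:
  assumes "nonneg_submonoid S" "H \<subseteq> S"
  shows "monoid_span H \<subseteq> S"
proof
  fix x assume "x \<in> monoid_span H"
  then obtain F c where "finite F" "F \<subseteq> H" "x = (\<Sum>h\<in>F. int (c h) *s h)"
    unfolding monoid_span_def by blast
  then show "x \<in> S"
    using assms by (auto intro!: nonneg_submonoid_sum nonneg_submonoid_smult)
qed

lemma zero_in_monoid_span: "0 \<in> monoid_span H"
  unfolding monoid_span_def by (auto intro!: exI[of _ "{}"])

lemma monoid_span_base: "h \<in> H \<Longrightarrow> h \<in> monoid_span H"
  unfolding monoid_span_def by (auto intro!: exI[of _ "{h}"] exI[of _ "\<lambda>_. 1"])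

lemma sum_smult_extend:
  assumes "finite F" "F1 \<subseteq> F"
  shows "(\<Sum>h\<in>F. int (if h \<in> F1 then c h else 0) *s (h :: int^'r)) = (\<Sum>h\<in>F1. int (c h) *s h)"
proof -
  have "(\<Sum>h\<in>F. int (if h \<in> F1 then c h else 0) *s h) = (\<Sum>h\<in>F1. int (if h \<in> F1 then c h else 0) *s h)"
    using assms by (intro sum.mono_neutral_right) auto
  also have "\<dots> = (\<Sum>h\<in>F1. int (c h) *s h)" by (rule sum.cong) auto
  finally show ?thesis .
qed

lemma monoid_span_add:
  assumes "x \<in> monoid_span H" "y \<in> monoid_span H"
  shows "x + y \<in> monoid_span H"
proof -
  obtain F1 c1 F2 c2 where f: "finite F1" "F1 \<subseteq> H" "x = (\<Sum>h\<in>F1. int (c1 h) *s h)"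
    "finite F2" "F2 \<subseteq> H" "y = (\<Sum>h\<in>F2. int (c2 h) *s h)"
    using assms unfolding monoid_span_def by blast
  define c where "c h = (if h \<in> F1 then c1 h else 0) + (if h \<in> F2 then c2 h else 0)" for h
  have "(\<Sum>h\<in>F1 \<union> F2. int (c h) *s h) = (\<Sum>h\<in>F1 \<union> F2. int (if h \<in> F1 then c1 h else 0) *s h)
      + (\<Sum>h\<in>F1 \<union> F2. int (if h \<in> F2 then c2 h else 0) *s h)"
    unfolding c_def by (simp only: of_nat_add vector_sadd_rdistrib sum.distrib)
  also have "\<dots> = x + y"
    unfolding f(3,6) using f by (simp add: sum_smult_extend)
  finally show ?thesis
    unfolding monoid_span_def using f by (intro CollectI exI[of _ "F1 \<union> F2"] exI[of _ c]) auto
qed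

definition coord_sum :: "int^'r::finite \<Rightarrow> nat" where
  "coord_sum x = (\<Sum>i\<in>UNIV. nat (x $ i))"

lemma coord_sum_add: "\<forall>i. a $ i \<ge> 0 \<Longrightarrow> \<forall>i. b $ i \<ge> 0 \<Longrightarrow> coord_sum (a + b) = coord_sum a + coord_sum b"
  unfolding coord_sum_def by (simp add: nat_add_distrib sum.distrib)

lemma coord_sum_pos: "\<forall>i. a $ i \<ge> 0 \<Longrightarrow> a \<noteq> 0 \<Longrightarrow> coord_sum a > 0"
proof -
  assume "\<forall>i. a $ i \<ge> 0" "a \<noteq> 0"
  then obtain i where "a $ i > 0" by (metis order_le_less vec_eq_iff zero_index)
  then show ?thesis unfolding coord_sum_def by (metis finite UNIV_I sum_pos2 zero_le zero_less_nat_eq)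
qed

lemma in_monoid_span_irreducibles:
  assumes "nonneg_submonoid S"
  shows "x \<in> S \<Longrightarrow> x \<in> monoid_span (irreducibles S)"
proof (induction "coord_sum x" arbitrary: x rule: less_induct)
  case less
  show ?case
  proof (cases "x \<in> irreducibles S \<or> x = 0")
    case True
    then show ?thesis using zero_in_monoid_span monoid_span_base by blast
  next
    case False
    then obtain a b where ab: "a \<in> S" "b \<in> S" "x = a + b" "a \<noteq> 0" "b \<noteq> 0"
      using less.prems by (auto simp: irreducibles_def)
    have nonneg: "\<forall>i. a $ i \<ge> 0" "\<forall>i. b $ i \<ge> 0"
      using ab assms by (auto simp: nonneg_submonoid_def)
    then have "coord_sum a < coord_sum x" "coord_sum b < coord_sum x"
      using coord_sum_add[OF nonneg] coord_sum_pos ab by auto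
    then show ?thesis using less.hyps ab monoid_span_add by metis
  qed
qed

lemma irreducibles_subset:
  assumes "nonneg_submonoid S" "H \<subseteq> S" "monoid_span H = S"
  shows "irreducibles S \<subseteq> H"
proof
  fix x assume x: "x \<in> irreducibles S"
  then have "x \<in> monoid_span H" using assms by (simp add: irreducibles_def)
  then obtain F c where f: "finite F" "F \<subseteq> H" "x = (\<Sum>h\<in>F. int (c h) *s h)"
    unfolding monoid_span_def by blast
  have "\<exists>h0\<in>F. c h0 > 0 \<and> h0 \<noteq> 0"
  proof (rule ccontr)
    assume "\<not> ?thesis"
    then have "\<forall>h\<in>F. int (c h) *s h = 0" by auto
    then have "x = 0" using f by (simp add: sum.neutral)
    then show False using x by (simp add: irreducibles_def)
  qed
  then obtain h0 where h0: "h0 \<in> F" "c h0 > 0" "h0 \<noteq> 0" by blast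
  define r where "r = int (c h0 - 1) *s h0 + (\<Sum>h\<in>F - {h0}. int (c h) *s h)"
  have "x = int (c h0) *s h0 + (\<Sum>h\<in>F - {h0}. int (c h) *s h)"
    using f h0 by (simp add: sum.remove)
  also have "int (c h0) = 1 + int (c h0 - 1)" using h0 by simp
  finally have x_split: "x = h0 + r" unfolding r_def by (simp add: vector_sadd_rdistrib add.assoc)
  have "F \<subseteq> S" using f assms by auto
  then have "h0 \<in> S" "int (c h0 - 1) *s h0 \<in> S" "(\<Sum>h\<in>F - {h0}. int (c h) *s h) \<in> S"
    using assms(1) h0 f(1) nonneg_submonoid_smult[OF assms(1)]
    by (auto simp del: of_nat_diff intro!: nonneg_submonoid_sum)
  then have "r \<in> S" "h0 \<in> S"
    using assms(1) unfolding r_def nonneg_submonoid_def by auto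
  then have "r = 0" using x x_split h0 by (auto simp: irreducibles_def)
  then show "x \<in> H" using x_split h0 f by auto
qed

lemma hilbert_basis_eq_irreducibles:
  assumes "nonneg_submonoid (lattice_points C)"
  shows "hilbert_basis C = irreducibles (lattice_points C)"
proof -
  let ?S = "lattice_points C"
  have sub: "irreducibles ?S \<subseteq> ?S" by (auto simp: irreducibles_def)
  then have span: "monoid_span (irreducibles ?S) = ?S"
    using in_monoid_span_irreducibles[OF assms] monoid_span_subset[OF assms] by auto
  have minimal: "monoid_span H' \<noteq> ?S" if "H' \<subset> irreducibles ?S" for H'
    using irreducibles_subset[OF assms, of H'] that sub by auto
  show ?thesis
    unfolding hilbert_basis_def
  proof (rule the_equality)
    show "irreducibles ?S \<subseteq> ?S \<and> monoid_span (irreducibles ?S) = ?S \<and>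
        (\<forall>H'. H' \<subset> irreducibles ?S \<longrightarrow> monoid_span H' \<noteq> ?S)"
      using sub span minimal by blast
  next
    fix H assume "H \<subseteq> ?S \<and> monoid_span H = ?S \<and> (\<forall>H'. H' \<subset> H \<longrightarrow> monoid_span H' \<noteq> ?S)"
    then show "H = irreducibles ?S"
      using irreducibles_subset[OF assms] span by blast
  qed
qed

lemma rvec_nth [simp]: "rvec x $ i = of_int (x $ i)"
  by (simp add: rvec_def)

lemma pmap_nth: "pmap ms s $ j = (\<Sum>i\<in>UNIV. s $ i * of_int (ms i $ j))"
  by (simp add: pmap_def)

lemma rvec_sum_smult: "rvec (\<Sum>h\<in>F. int (c h) *s h) = (\<Sum>h\<in>F. of_nat (c h) *s rvec h)"
  by (simp add: vec_eq_iff sum_component)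

lemma pmap_sum_smult: "pmap ms (\<Sum>h\<in>F. a h *s s h) = (\<Sum>h\<in>F. a h *s pmap ms (s h))"
  by (simp add: vec_eq_iff pmap_nth sum_component sum_distrib_left sum_distrib_right mult.assoc
      sum.swap[where A=F])

lemma pmap_smult: "pmap ms (a *s s) = a *s pmap ms s"
  by (simp add: vec_eq_iff pmap_nth sum_distrib_left mult.assoc)

lemma rvec_smult_cancel:
  assumes "m \<noteq> 0" "q *s rvec m = q' *s rvec m"
  shows "q = q'"
proof -
  obtain j where "m $ j \<noteq> 0" using assms(1) by (metis vec_eq_iff zero_index)
  moreover have "q * of_int (m $ j) = q' * of_int (m $ j)"
    using assms(2) by (metis rvec_nth vector_smult_component)
  ultimately show ?thesis by simp
qed

definition cost :: "('r::finite \<Rightarrow> int) \<Rightarrow> rat^'r \<Rightarrow> rat" where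
  "cost e s = (\<Sum>i\<in>UNIV. s $ i * of_int (e i))"

lemma cost_rvec: "cost e (rvec s) = of_int (\<Sum>i\<in>UNIV. s $ i * e i)"
  by (simp add: cost_def)

lemma cost_sum_smult: "cost e (\<Sum>h\<in>F. a h *s s h) = (\<Sum>h\<in>F. a h * cost e (s h))"
  by (simp add: cost_def sum_component sum_distrib_left sum_distrib_right mult.assoc)
    (rule sum.swap)

lemma cost_smult: "cost e (a *s s) = a * cost e s"
  by (simp add: cost_def sum_distrib_left mult.assoc)

lemma lattice_points_fiber_cone_iff:
  "x \<in> lattice_points (fiber_cone ms m) \<longleftrightarrow>
     (\<forall>i. x $ i \<ge> 0) \<and> (\<exists>q\<ge>0. pmap ms (rvec x) = q *s rvec m)"
  by (auto simp: lattice_points_def fiber_cone_def ray_def)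

lemma nonneg_submonoid_fiber_cone: "nonneg_submonoid (lattice_points (fiber_cone ms m))"
proof -
  let ?S = "lattice_points (fiber_cone ms m)"
  have "pmap ms (rvec 0) = 0 *s rvec m" by (simp add: vec_eq_iff pmap_nth)
  then have "0 \<in> ?S" unfolding lattice_points_fiber_cone_iff by auto
  moreover have "a + b \<in> ?S" if ab: "a \<in> ?S" "b \<in> ?S" for a b
  proof -
    obtain qa qb where "qa \<ge> 0" "pmap ms (rvec a) = qa *s rvec m"
        "qb \<ge> 0" "pmap ms (rvec b) = qb *s rvec m"
      using ab unfolding lattice_points_fiber_cone_iff by blast
    then have "pmap ms (rvec (a + b)) = (qa + qb) *s rvec m"
      by (simp add: vec_eq_iff pmap_nth distrib_right sum.distrib)
    then show ?thesis
      using ab \<open>qa \<ge> 0\<close> \<open>qb \<ge> 0\<close> unfolding lattice_points_fiber_cone_iff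
      by (auto intro!: exI[of _ "qa + qb"])
  qed
  moreover have "\<forall>x\<in>?S. \<forall>i. x $ i \<ge> 0" by (simp add: lattice_points_fiber_cone_iff)
  ultimately show ?thesis by (simp add: nonneg_submonoid_def)
qed

lemma H_star_eq:
  "H_star ms m = {s \<in> irreducibles (lattice_points (fiber_cone ms m)). pmap ms (rvec s) \<noteq> 0}"
  by (simp add: H_star_def hilbert_basis_eq_irreducibles[OF nonneg_submonoid_fiber_cone])

lemma primitive_multiple_is_integral:
  assumes "primitive m" "rvec z = q *s rvec m"
  shows "\<exists>k. q = of_int k"
proof -
  obtain a b where ab: "quotient_of q = (a, b)" by (cases "quotient_of q")
  have b: "b > 0" "q = of_int a / of_int b" "coprime a b"
    using quotient_of_denom_pos[OF ab] quotient_of_div[OF ab] quotient_of_coprime[OF ab] by auto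
  have "b * z $ j = a * m $ j" for j
  proof -
    have "of_int b * of_int (z $ j) = of_int a * (of_int (m $ j) :: rat)"
      using assms(2)[THEN arg_cong[where f="\<lambda>v. v $ j"]] b by (simp add: field_simps)
    then show ?thesis by (metis of_int_eq_iff of_int_mult)
  qed
  then have "b dvd m $ j" for j
    using b(3) by (metis coprime_commute coprime_dvd_mult_right_iff dvd_triv_left)
  then have "m = b *s (\<chi> j. m $ j div b)" by (simp add: vec_eq_iff)
  then have "b = 1" using assms(1) b(1) unfolding primitive_def by fastforce
  then show ?thesis using b by auto
qed

lemma lam_eq:
  assumes "m \<noteq> 0" "k > 0" "pmap ms (rvec h) = of_int k *s rvec m"
  shows "lam ms m h = k"
  unfolding lam_def
proof (rule the_equality)
  fix k' assume "0 < k' \<and> pmap ms (rvec h) = of_int k' *s rvec m"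
  then have "of_int k' = (of_int k :: rat)" using assms rvec_smult_cancel by metis
  then show "k' = k" by simp
qed (use assms in auto)

lemma H_star_lam:
  assumes "primitive m" "s \<in> H_star ms m"
  shows "lam ms m s > 0" "pmap ms (rvec s) = of_int (lam ms m s) *s rvec m"
proof -
  have m0: "m \<noteq> 0" using assms(1) by (simp add: primitive_def)
  obtain q where q: "q \<ge> 0" "pmap ms (rvec s) = q *s rvec m" "pmap ms (rvec s) \<noteq> 0"
    using assms(2) by (auto simp: H_star_eq irreducibles_def lattice_points_fiber_cone_iff)
  have "pmap ms (rvec s) = rvec (\<Sum>i\<in>UNIV. s $ i *s ms i)"
    by (simp add: vec_eq_iff pmap_nth sum_component)
  then obtain k where k: "q = of_int k" using primitive_multiple_is_integral[OF assms(1)] q(2) by metis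
  then have "k > 0" using q by (cases "k = 0") auto
  then show "lam ms m s > 0" "pmap ms (rvec s) = of_int (lam ms m s) *s rvec m"
    using lam_eq[OF m0 _ q(2)[unfolded k]] q(2) k by auto
qed

lemma Delta_iff:
  "v \<in> Delta ms e \<longleftrightarrow> (\<forall>i. (\<Sum>j\<in>UNIV. of_int (ms i $ j) * v $ j) \<ge> - of_int (e i))"
  by (simp add: Delta_def pairing_def)

lemma weak_duality:
  assumes "\<forall>i. s $ i \<ge> 0" "pmap ms s = q *s rvec m" "v \<in> Delta ms e"
  shows "cost e s \<ge> - q * pairing m v"
proof -
  have "\<forall>j. (\<Sum>i\<in>UNIV. s $ i * of_int (ms i $ j)) = q * of_int (m $ j)"
    using assms(2) by (simp add: vec_eq_iff pmap_nth)
  then have "cost e s \<ge> - (\<Sum>j\<in>UNIV. q * of_int (m $ j) * v $ j)"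
    using lp_weak_duality[where y="\<lambda>i. s $ i" and x="\<lambda>j. v $ j" and M="\<lambda>i j. of_int (ms i $ j)"
        and E="\<lambda>i. of_int (e i)" and mm="\<lambda>j. q * of_int (m $ j)"] assms(1,3)
    unfolding cost_def Delta_iff by blast
  then show ?thesis by (simp add: pairing_def sum_distrib_left mult.assoc sum_negf)
qed

lemma strong_duality:
  fixes ms :: "'r::finite \<Rightarrow> int^'n::finite"
  assumes "Delta ms e \<noteq> {}" "rvec m \<in> cone_gen ms"
  shows "\<exists>v\<in>Delta ms e. \<exists>y. (\<forall>i. y $ i \<ge> 0) \<and> pmap ms y = rvec m \<and> cost e y = - pairing m v"
proof -
  obtain v0 where "v0 \<in> Delta ms e" using assms(1) by auto
  then have feasible: "\<forall>i. (\<Sum>j\<in>UNIV. of_int (ms i $ j) * v0 $ j) \<ge> - of_int (e i)"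
    by (simp add: Delta_iff)
  obtain a where a: "\<forall>i. a i \<ge> 0" "rvec m = (\<Sum>i\<in>UNIV. a i *s rvec (ms i))"
    using assms(2) unfolding cone_gen_def by auto
  then have "\<forall>j. (\<Sum>i\<in>UNIV. a i * of_int (ms i $ j)) = of_int (m $ j)"
    by (simp add: vec_eq_iff sum_component)
  then obtain x :: "'n \<Rightarrow> rat" and y where xy: "\<forall>i. (\<Sum>j\<in>UNIV. of_int (ms i $ j) * x j) \<ge> - of_int (e i)"
      "\<forall>i. y i \<ge> 0" "\<forall>j. (\<Sum>i\<in>UNIV. y i * of_int (ms i $ j)) = of_int (m $ j)"
      "(\<Sum>i\<in>UNIV. y i * of_int (e i)) = - (\<Sum>j\<in>UNIV. of_int (m $ j) * x j)"
    using lp_strong_duality[where M="\<lambda>i j. of_int (ms i $ j)" and E="\<lambda>i. of_int (e i)"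
        and mm="\<lambda>j. of_int (m $ j)", OF feasible a(1)] by blast
  show ?thesis
  proof (intro bexI exI conjI)
    show "(\<chi> j. x j) \<in> Delta ms e" using xy(1) by (simp add: Delta_iff)
    show "\<forall>i. (\<chi> i. y i) $ i \<ge> 0" "pmap ms (\<chi> i. y i) = rvec m"
      using xy(2,3) by (simp_all add: vec_eq_iff pmap_nth)
    show "cost e (\<chi> i. y i) = - pairing m (\<chi> j. x j)"
      using xy(4) by (simp add: cost_def pairing_def)
  qed
qed

subsection \<open>Attaining the bound on the Hilbert basis\<close>

lemma H_star_ratio_lower_bound:
  assumes "primitive m" "v \<in> Delta ms e" "s \<in> H_star ms m"
  shows "of_int (\<Sum>i\<in>UNIV. s $ i * e i) / of_int (lam ms m s) \<ge> - pairing m v"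
proof -
  have "\<forall>i. rvec s $ i \<ge> 0"
    using assms(3) by (auto simp: H_star_eq irreducibles_def lattice_points_fiber_cone_iff)
  then have "cost e (rvec s) \<ge> - of_int (lam ms m s) * pairing m v"
    using weak_duality H_star_lam[OF assms(1,3)] assms(2) by blast
  then show ?thesis
    using H_star_lam(1)[OF assms(1,3)] by (simp add: cost_rvec pos_le_divide_eq mult.commute)
qed

lemma common_denominator:
  fixes y :: "'a \<Rightarrow> rat"
  shows "finite A \<Longrightarrow> \<exists>N::int. N > 0 \<and> (\<forall>i\<in>A. \<exists>z::int. of_int N * y i = of_int z)"
proof (induction A rule: finite_induct)
  case empty
  then show ?case by (intro exI[of _ 1]) auto
next
  case (insert a A)
  then obtain N where N: "N > 0" "\<forall>i\<in>A. \<exists>z::int. of_int N * y i = of_int z" by blast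
  obtain p b where pb: "quotient_of (y a) = (p, b)" by (cases "quotient_of (y a)")
  have b: "b > 0" "y a = of_int p / of_int b"
    using quotient_of_denom_pos[OF pb] quotient_of_div[OF pb] by auto
  have "\<exists>z::int. of_int (N * b) * y i = of_int z" if i: "i \<in> insert a A" for i
  proof (cases "i = a")
    case True
    then show ?thesis using b by (intro exI[of _ "N * p"]) auto
  next
    case False
    then obtain z where "of_int N * y i = (of_int z :: rat)" using N i by auto
    then show ?thesis by (intro exI[of _ "b * z"]) (simp add: mult.commute mult.left_commute)
  qed
  then show ?case using N b by (intro exI[of _ "N * b"]) auto
qed

lemma integral_multiple_in_fiber_cone:
  assumes "\<forall>i. y $ i \<ge> 0" "pmap ms y = rvec m"
  shows "\<exists>N s. N > 0 \<and> s \<in> lattice_points (fiber_cone ms m) \<and> rvec s = of_int N *s y"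
proof -
  obtain N where N: "N > 0" "\<forall>i\<in>UNIV. \<exists>z::int. of_int N * y $ i = of_int z"
    using common_denominator[of UNIV "\<lambda>i. y $ i"] by auto
  then obtain z where z: "\<forall>i. of_int N * y $ i = of_int (z i)" using bchoice[OF N(2)] by auto
  define s where "s = (\<chi> i. z i)"
  have rvec_s: "rvec s = of_int N *s y" using z by (simp add: s_def vec_eq_iff)
  moreover have "pmap ms (rvec s) = of_int N *s rvec m"
    using assms(2) by (simp add: rvec_s pmap_smult)
  moreover have "s $ i \<ge> 0" for i
  proof -
    have "(of_int (s $ i) :: rat) = of_int N * y $ i" using z by (simp add: s_def)
    also have "\<dots> \<ge> 0" using N(1) assms(1) by simp
    finally show ?thesis by simp
  qed
  ultimately have "s \<in> lattice_points (fiber_cone ms m)"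
    using N(1) unfolding lattice_points_fiber_cone_iff by (auto intro!: exI[of _ "of_int N"])
  then show ?thesis using N(1) rvec_s by blast
qed

lemma weighted_sum_bound_attained:
  fixes a f q :: "'a \<Rightarrow> 'b::linordered_field"
  assumes "finite F" "\<forall>h\<in>F. a h \<ge> 0" "\<forall>h\<in>F. f h \<ge> c * q h"
    and "(\<Sum>h\<in>F. a h * f h) \<le> c * (\<Sum>h\<in>F. a h * q h)" "(\<Sum>h\<in>F. a h * q h) > 0"
  shows "\<exists>h\<in>F. q h > 0 \<and> f h = c * q h"
proof -
  have nonneg: "\<forall>h\<in>F. a h * (f h - c * q h) \<ge> 0" using assms(2,3) by simp
  have "(\<Sum>h\<in>F. a h * (f h - c * q h)) \<le> 0"
    using assms(4) by (simp add: right_diff_distrib sum_subtractf sum_distrib_left mult.left_commute)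
  moreover have "(\<Sum>h\<in>F. a h * (f h - c * q h)) \<ge> 0" using nonneg by (simp add: sum_nonneg)
  ultimately have "(\<Sum>h\<in>F. a h * (f h - c * q h)) = 0" by (rule antisym)
  then have zero: "\<forall>h\<in>F. a h * (f h - c * q h) = 0"
    using sum_nonneg_eq_0_iff[OF assms(1), of "\<lambda>h. a h * (f h - c * q h)"] nonneg by blast
  have "\<exists>h\<in>F. a h * q h > 0"
  proof (rule ccontr)
    assume "\<not> ?thesis"
    then have "(\<Sum>h\<in>F. a h * q h) \<le> 0" by (simp add: sum_nonpos not_less)
    then show False using assms(5) by simp
  qed
  then obtain h where h: "h \<in> F" "a h * q h > 0" by blast
  then have "a h > 0" "q h > 0" using assms(2) by (auto simp: zero_less_mult_iff)
  then show ?thesis using h zero by auto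
qed

lemma H_star_attains_bound:
  fixes ms :: "'r::finite \<Rightarrow> int^'n::finite"
  assumes prim: "primitive m" and v: "v \<in> Delta ms e"
    and s0: "s0 \<in> lattice_points (fiber_cone ms m)" "pmap ms (rvec s0) = of_int N *s rvec m" "N > 0"
    and cost_s0: "cost e (rvec s0) \<le> - of_int N * pairing m v"
  shows "\<exists>h\<in>H_star ms m. of_int (\<Sum>i\<in>UNIV. h $ i * e i) / of_int (lam ms m h) = - pairing m v"
proof -
  let ?S = "lattice_points (fiber_cone ms m)"
  define c where "c = - pairing m v"
  have m0: "m \<noteq> 0" using prim by (simp add: primitive_def)
  obtain F k where F: "finite F" "F \<subseteq> irreducibles ?S" "s0 = (\<Sum>h\<in>F. int (k h) *s h)"
    using in_monoid_span_irreducibles[OF nonneg_submonoid_fiber_cone s0(1)]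
    unfolding monoid_span_def by blast
  have "\<forall>h\<in>F. (\<forall>i. h $ i \<ge> 0) \<and> (\<exists>q\<ge>0. pmap ms (rvec h) = q *s rvec m)"
    using F(2) by (auto simp: irreducibles_def lattice_points_fiber_cone_iff)
  then obtain q where q: "\<forall>h\<in>F. (\<forall>i. h $ i \<ge> 0) \<and> q h \<ge> 0 \<and> pmap ms (rvec h) = q h *s rvec m"
    by metis
  have rvec_s0: "rvec s0 = (\<Sum>h\<in>F. of_nat (k h) *s rvec h)"
    using F(3) rvec_sum_smult by simp
  have "pmap ms (rvec s0) = (\<Sum>h\<in>F. (of_nat (k h) * q h) *s rvec m)"
    unfolding rvec_s0 pmap_sum_smult using q by (intro sum.cong) (auto simp: vector_smult_assoc)
  also have "\<dots> = (\<Sum>h\<in>F. of_nat (k h) * q h) *s rvec m"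
    by (simp add: vec_eq_iff sum_component sum_distrib_right)
  finally have N_eq: "of_int N = (\<Sum>h\<in>F. of_nat (k h) * q h)"
    using s0(2) rvec_smult_cancel[OF m0] by metis
  have "cost e (rvec s0) = (\<Sum>h\<in>F. of_nat (k h) * cost e (rvec h))"
    unfolding rvec_s0 cost_sum_smult ..
  moreover have "\<forall>h\<in>F. cost e (rvec h) \<ge> c * q h"
    using q weak_duality[OF _ _ v] by (simp add: c_def mult.commute)
  ultimately obtain h where h: "h \<in> F" "q h > 0" "cost e (rvec h) = c * q h"
    using weighted_sum_bound_attained[OF F(1), where a="\<lambda>h. of_nat (k h)" and f="\<lambda>h. cost e (rvec h)" and q=q and c=c]
      cost_s0 N_eq s0(3) by (auto simp: c_def mult.commute)
  have ph: "pmap ms (rvec h) = q h *s rvec m" using q h(1) by blast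
  then have "pmap ms (rvec h) \<noteq> 0"
    using h(2) rvec_smult_cancel[OF m0, of "q h" 0] by auto
  then have hH: "h \<in> H_star ms m" using h(1) F(2) by (auto simp: H_star_eq)
  then have "q h = of_int (lam ms m h)"
    using H_star_lam(2)[OF prim hH] ph rvec_smult_cancel[OF m0] by metis
  then show ?thesis using hH h(2,3) by (intro bexI[of _ h]) (auto simp: c_def cost_rvec)
qed

theorem lemma4p4p11:
  fixes ms :: "'r::finite \<Rightarrow> int^'n::finite" and e :: "'r \<Rightarrow> int" and m :: "int^'n"
  assumes nonzero: "\<forall>i. ms i \<noteq> 0"
    and generates: "\<forall>x::int^'n. \<exists>c::'r \<Rightarrow> int. x = (\<Sum>i\<in>UNIV. c i *s ms i)"
    and prim: "primitive m"
    and in_cone: "ray m \<subseteq> cone_gen ms"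
    and nonempty: "Delta ms e \<noteq> {}"
  shows "\<exists>c::rat.
      (\<exists>s\<in>H_star ms m. of_int (\<Sum>i\<in>UNIV. s $ i * e i) / of_int (lam ms m s) = c) \<and>
      (\<forall>s\<in>H_star ms m. of_int (\<Sum>i\<in>UNIV. s $ i * e i) / of_int (lam ms m s) \<ge> c) \<and>
      (\<exists>v\<in>Delta ms e. pairing m v = - c) \<and>
      (\<forall>v\<in>Delta ms e. pairing m v \<ge> - c)"
proof -
  have "rvec m \<in> cone_gen ms"
    using in_cone unfolding ray_def by (force intro: exI[of _ 1])
  then obtain v y where v: "v \<in> Delta ms e"
    and y: "\<forall>i. y $ i \<ge> 0" "pmap ms y = rvec m" "cost e y = - pairing m v"
    using strong_duality[OF nonempty] by blast
  obtain N s0 where N: "N > 0" "s0 \<in> lattice_points (fiber_cone ms m)" "rvec s0 = of_int N *s y"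
    using integral_multiple_in_fiber_cone[OF y(1,2)] by blast
  have "pmap ms (rvec s0) = of_int N *s rvec m" "cost e (rvec s0) = - of_int N * pairing m v"
    using N(3) y(2,3) by (simp_all add: pmap_smult cost_smult)
  then have "\<exists>h\<in>H_star ms m. of_int (\<Sum>i\<in>UNIV. h $ i * e i) / of_int (lam ms m h) = - pairing m v"
    using H_star_attains_bound[OF prim v N(2) _ N(1)] by simp
  moreover have "\<forall>v'\<in>Delta ms e. pairing m v' \<ge> pairing m v"
    using weak_duality[OF y(1), where q=1] y(2,3) by force
  ultimately show ?thesis
    using v H_star_ratio_lower_bound[OF prim v] by (intro exI[of _ "- pairing m v"]) auto
qed

end
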